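(* If $S$ is an $\varepsilon$-synchronization string, then $\mathrm{RSD}(S[1,i],S[1,j])>1-\varepsilon$ for any $i<j$.
   Context: $\mathrm{ED}$ is the insertion/deletion edit distance. $S[i,j]$ denotes positions $i$ through $j$, $S[i,j)$ positions $i$ through $j-1$, $S(i,j]=S[i+1,j]$; for $i<1$, $S[i,j]=\bot^{-i+1}S[1,j]$ with $\bot\notin\Sigma$. $\mathrm{RSD}(S,S')=\max_{k>0}\frac{\mathrm{ED}(S(|S|-k,|S|],S'(|S'|-k,|S'|])}{2k}$. A string $S\in\Sigma^n$ is an $\varepsilon$-synchronization string ($0<\varepsilon<1$) if for every $1\le i<j<k\le n+1$, $\mathrm{ED}(S[i,j),S[j,k))>(1-\varepsilon)(k-i)$. *)

theory Defs
  imports Complex_Main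
begin

fun ED :: "'a list \<Rightarrow> 'a list \<Rightarrow> nat" where
  "ED [] ys = length ys"
| "ED xs [] = length xs"
| "ED (x # xs) (y # ys) =
     (if x = y then ED xs ys else Suc (min (ED xs (y # ys)) (ED (x # xs) ys)))"

text \<open>Substring S[i,j) (1-based, positions i..j-1), for 1 <= i <= j <= n+1.\<close>
definition substr :: "'a list \<Rightarrow> nat \<Rightarrow> nat \<Rightarrow> 'a list" where
  "substr S i j = drop (i - 1) (take (j - 1) S)"

definition sync_string :: "real \<Rightarrow> 'a list \<Rightarrow> bool" where
  "sync_string eps S \<longleftrightarrow> 0 < eps \<and> eps < 1 \<and>
     (\<forall>i j k. 1 \<le> i \<and> i < j \<and> j < k \<and> k \<le> length S + 1 \<longrightarrow>
        real (ED (substr S i j) (substr S j k)) > (1 - eps) * real (k - i))"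

text \<open>Suffix S(|S|-k, |S|] of length k, padded on the left with the extra
symbol bottom (represented by None) when k > |S|.\<close>
definition pad_suffix :: "nat \<Rightarrow> 'a list \<Rightarrow> 'a option list" where
  "pad_suffix k S = replicate (k - length S) None @ map Some (drop (length S - k) S)"

text \<open>Relative suffix distance (the maximum exists; we take the supremum).\<close>
definition RSD :: "'a list \<Rightarrow> 'a list \<Rightarrow> real" where
  "RSD S S' = (SUP k\<in>{0<..}. real (ED (pad_suffix k S) (pad_suffix k S')) / (2 * real k))"

end

theory Submission
  imports Defs
begin

text \<open>Take k = j - i. The last k symbols of S[1,j] are S(i,j]. If k \<le> i, the last k symbols
of S[1,i] are S(i-k,i], and the synchronization property for the split S(i-k,i] | S(i,j]
gives an edit distance above (1-\<epsilon>)2k. If k > i, the suffix of S[1,i] is k - i padding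
symbols followed by S[1,i]; each padding symbol costs one deletion, and S[1,i] | S(i,j]
has edit distance above (1-\<epsilon>)j = (1-\<epsilon>)(k+i), which again totals more than
(1-\<epsilon>)2k. Dividing by 2k bounds one term of the supremum defining RSD.\<close>

lemma ED_Nil_right [simp]: "ED xs [] = length xs"
  by (cases xs) auto

lemma ED_sym: "ED xs ys = ED ys xs"
  by (induction xs ys rule: ED.induct) (auto simp: min.commute)

lemma ED_le_length_add: "ED xs ys \<le> length xs + length ys"
  by (induction xs ys rule: ED.induct) auto

lemma ED_map_inj: "inj f \<Longrightarrow> ED (map f xs) (map f ys) = ED xs ys"
  by (induction xs ys rule: ED.induct) (auto simp: inj_eq)

text \<open>Both inequalities are needed in the induction, since the recursion of ED
removes a symbol on either side.\<close>
lemma ED_Cons_right_bounds: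
  "ED xs (y # ys) \<le> Suc (ED xs ys) \<and> ED xs ys \<le> Suc (ED xs (y # ys))"
proof (induction "length xs + length ys" arbitrary: xs ys y rule: less_induct)
  case less
  show ?case
  proof (cases xs)
    case Nil
    then show ?thesis by simp
  next
    case (Cons x xs')
    have IH: "ED a (c # b) \<le> Suc (ED a b) \<and> ED a b \<le> Suc (ED a (c # b))"
      if "length a + length b < length xs + length ys" for a b and c :: 'a
      using less that by blast
    have drop_left: "ED xs' ys \<le> Suc (ED xs ys)" "ED xs ys \<le> Suc (ED xs' ys)"
      using IH[of ys xs' x] Cons by (simp_all add: ED_sym[of _ ys])
    have "ED xs' ys \<le> Suc (ED xs' (y # ys))"
      using IH[of xs' ys y] Cons by simp
    with drop_left Cons show ?thesis
      by (cases "x = y") (auto simp: min_def)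
  qed
qed

lemma ED_Cons_fresh: "a \<notin> set ys \<Longrightarrow> ED (a # xs) ys = Suc (ED xs ys)"
proof (induction ys)
  case (Cons y ys)
  then show ?case
    using ED_Cons_right_bounds[of xs y ys] by auto
qed simp

lemma ED_replicate_fresh: "a \<notin> set ys \<Longrightarrow> ED (replicate m a @ xs) ys = m + ED xs ys"
  by (induction m) (auto simp: ED_Cons_fresh)

lemma length_pad_suffix [simp]: "length (pad_suffix k xs) = k"
  by (simp add: pad_suffix_def)

lemma pad_suffix_le_length:
  "k \<le> length xs \<Longrightarrow> pad_suffix k xs = map Some (drop (length xs - k) xs)"
  by (simp add: pad_suffix_def)

lemma pad_suffix_ge_length:
  "length xs \<le> k \<Longrightarrow> pad_suffix k xs = replicate (k - length xs) None @ map Some xs"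
  by (simp add: pad_suffix_def)

lemma RSD_ge:
  assumes "0 < k"
  shows "real (ED (pad_suffix k S) (pad_suffix k S')) / (2 * real k) \<le> RSD S S'"
proof -
  let ?f = "\<lambda>k. real (ED (pad_suffix k S) (pad_suffix k S')) / (2 * real k)"
  have "?f m \<le> 1" for m
    using ED_le_length_add[of "pad_suffix m S" "pad_suffix m S'"]
    by (cases "m = 0") (auto simp: divide_le_eq)
  then have "bdd_above (?f ` {0<..})"
    by (intro bdd_aboveI) auto
  then show ?thesis
    unfolding RSD_def using assms by (intro cSUP_upper) auto
qed

lemma sync_string_ED_drop_take:
  assumes "sync_string eps S" and "h < i" and "i < j" and "j \<le> length S"
  shows "real (ED (drop h (take i S)) (drop i (take j S))) > (1 - eps) * real (j - h)"
  using assms unfolding sync_string_def substr_def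
  by (elim conjE allE[of _ "h + 1"] allE[of _ "i + 1"] allE[of _ "j + 1"]) auto

lemma sync_string_ED_take:
  assumes "sync_string eps S" and "i < j" and "j \<le> length S"
  shows "real (ED (take i S) (drop i (take j S))) > (1 - eps) * real j"
proof (cases "i = 0")
  case True
  have "0 < eps" using assms(1) by (simp add: sync_string_def)
  with True assms show ?thesis by (simp add: mult_less_cancel_right2)
qed (use sync_string_ED_drop_take[of eps S 0 i j] assms in simp)

lemma sync_string_ED_pad_suffix_take:
  assumes sync: "sync_string eps S" and "i < j" and "j \<le> length S"
  defines "k \<equiv> j - i"
  shows "real (ED (pad_suffix k (take i S)) (pad_suffix k (take j S))) > (1 - eps) * (2 * real k)"
proof -
  have eps: "0 < eps" "eps < 1" using sync by (simp_all add: sync_string_def)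
  have pad_j: "pad_suffix k (take j S) = map Some (drop i (take j S))"
    using assms by (simp add: pad_suffix_le_length)
  show ?thesis
  proof (cases "k \<le> i")
    case True
    have "pad_suffix k (take i S) = map Some (drop (i - k) (take i S))"
      using True assms by (simp add: pad_suffix_le_length)
    moreover have "real (j - (i - k)) = 2 * real k"
      using True assms by simp
    ultimately show ?thesis
      using pad_j sync_string_ED_drop_take[OF sync, of "i - k" i j] True assms
      by (simp add: ED_map_inj inj_def)
  next
    case False
    have "pad_suffix k (take i S) = replicate (k - i) None @ map Some (take i S)"
      using False assms by (simp add: pad_suffix_ge_length)
    then have "ED (pad_suffix k (take i S)) (pad_suffix k (take j S))
        = (k - i) + ED (take i S) (drop i (take j S))"
      using pad_j by (simp add: ED_replicate_fresh ED_map_inj inj_def)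
    moreover have "(1 - eps) * real (k - i) \<le> real (k - i)"
      using eps by (intro mult_left_le_one_le) auto
    moreover have "real (k - i) + real j = 2 * real k"
      using False assms by simp
    ultimately show ?thesis
      using sync_string_ED_take[OF sync, of i j] assms by (simp add: algebra_simps)
  qed
qed

theorem lemma16:
  fixes S :: "'a list" and eps :: real and i j :: nat
  assumes "sync_string eps S"
    and "i < j" and "j \<le> length S"
  shows "RSD (take i S) (take j S) > 1 - eps"
proof -
  define k where "k = j - i"
  have "0 < k" using assms(2) by (simp add: k_def)
  have "1 - eps < real (ED (pad_suffix k (take i S)) (pad_suffix k (take j S))) / (2 * real k)"
    using sync_string_ED_pad_suffix_take[OF assms] \<open>0 < k\<close>
    by (simp add: k_def pos_less_divide_eq mult.commute)
  also have "\<dots> \<le> RSD (take i S) (take j S)"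
    using RSD_ge[OF \<open>0 < k\<close>] .
  finally show ?thesis .
qed

end
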